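(* Let $d\ge2$, let $g=\sum_{\mathbf k}g_{\mathbf k}u^{\mathbf k}\in R_d$ satisfy conditions (A)–(D) below, and let $s\ge d-2$ be an integer. Define $\omega\in\mathbb R^{\mathbb Z^d}$ by $\omega_{\mathbf 0}=0$ and $\omega_{\mathbf n}=\|\mathbf n\|^{-s}$ for $\mathbf n\ne\mathbf 0$, where $\|\cdot\|$ is the Euclidean norm. Then $g\cdot\omega\in\ell^1(\mathbb Z^d)$, where $(g\cdot\omega)_{\mathbf n}=\sum_{\mathbf k}g_{\mathbf k}\omega_{\mathbf n-\mathbf k}$. Conditions: (A) $\sum_{\mathbf k}g_{\mathbf k}=0$; (B) $\sum_{\mathbf k}g_{\mathbf k}k_i=0$ for all $i$; (C) $\sum_{\mathbf k}g_{\mathbf k}k_ik_j=0$ for all $i\ne j$; (D) $\sum_{\mathbf k}g_{\mathbf k}(k_i^2-k_j^2)=0$ for all $i\ne j$.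
   Context: $R_d=\mathbb Z[u_1^{\pm1},\dots,u_d^{\pm1}]$ with $u^{\mathbf k}=u_1^{k_1}\cdots u_d^{k_d}$; Laurent polynomials are identified with their finitely supported coefficient sequences on $\mathbb Z^d$. *)

theory Defs
  imports "HOL-Analysis.Analysis"
begin

text \<open>Laurent polynomials in R_d = Z[u_1^{+-1},...,u_d^{+-1}] are identified with their
  finitely supported coefficient functions on Z^d; the lattice Z^d is int^'n with d = CARD('n).\<close>

definition supp :: "(int ^ 'n \<Rightarrow> int) \<Rightarrow> (int ^ 'n) set" where
  "supp g = {k. g k \<noteq> 0}"

definition laurent_poly :: "(int ^ 'n \<Rightarrow> int) \<Rightarrow> bool" where
  "laurent_poly g \<longleftrightarrow> finite (supp g)"

definition lnorm :: "int ^ 'n::finite \<Rightarrow> real" where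
  "lnorm n = sqrt (\<Sum>i\<in>UNIV. (real_of_int (n $ i))\<^sup>2)"

definition omega :: "int \<Rightarrow> int ^ 'n::finite \<Rightarrow> real" where
  "omega s n = (if n = 0 then 0 else lnorm n powr (- real_of_int s))"

definition conv :: "(int ^ 'n \<Rightarrow> int) \<Rightarrow> (int ^ 'n \<Rightarrow> real) \<Rightarrow> int ^ 'n \<Rightarrow> real" where
  "conv g w n = (\<Sum>k\<in>supp g. real_of_int (g k) * w (n - k))"

end

theory Submission
  imports Defs
begin

text \<open>
  Write \<open>e = -s/2\<close>, so that \<open>\<omega>_m = ||m||^(2e)\<close> for \<open>m \<noteq> 0\<close>.  For a lattice point \<open>n\<close>
  of large norm \<open>L\<close> and \<open>k\<close> in the (finite) support of \<open>g\<close>, Taylor expansion of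
  \<open>t \<mapsto> ||n - t k||^(2e)\<close> up to second order gives \<open>\<omega>_(n-k)\<close> as a polynomial of degree two
  in \<open>k\<close> plus an error of size \<open>O(L^(2e-3))\<close>.  Summing against the coefficients of \<open>g\<close>,
  conditions (A) and (B) kill the terms of degree 0 and 1, and (C), (D) say that the
  second moments of \<open>g\<close> are isotropic (\<open>M\<close> times the identity), so that the quadratic
  terms add up to \<open>e M (2e - 2 + d) L^(2e-2)\<close>.  This vanishes for \<open>s = d - 2\<close>, and is
  \<open>O(L^(-(d+1)))\<close> for \<open>s \<ge> d - 1\<close>; the error term is \<open>O(L^(-s-3)) = O(L^(-(d+1)))\<close> as well.
  Finally \<open>\<Sum>_(n\<noteq>0) ||n||^(-r)\<close> converges over \<open>\<int>^d\<close> for \<open>r > d\<close>.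
\<close>

section \<open>Lattice points and summability of \<open>||n||^(-r)\<close>\<close>

definition rv :: "int^'n::finite \<Rightarrow> real^'n" where
  "rv n = (\<chi> i. real_of_int (n$i))"

lemma norm_rv: "norm (rv n) = lnorm n"
  by (simp add: rv_def norm_vec_def L2_set_def lnorm_def)

lemma rv_diff: "rv (n - k) = rv n - rv k"
  by (simp add: rv_def vec_eq_iff)

lemma rv_eq_0_iff: "rv n = 0 \<longleftrightarrow> n = 0"
  by (simp add: rv_def vec_eq_iff)

lemma abs_le_lnorm: "\<bar>real_of_int (n$i)\<bar> \<le> lnorm n"
  using component_le_norm_cart[of "rv n" i] unfolding norm_rv by (simp add: rv_def)

lemma lnorm_ge1:
  fixes n :: "int^'n::finite" assumes "n \<noteq> 0" shows "lnorm n \<ge> 1"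
proof -
  obtain i where "n$i \<noteq> 0" using assms by (metis vec_eq_iff zero_index)
  hence "1 \<le> \<bar>real_of_int (n$i)\<bar>" by linarith
  thus ?thesis using abs_le_lnorm[of n i] by linarith
qed

lemma finite_lnorm_ball: "finite {n::int^'n::finite. lnorm n < B}"
proof -
  define S where "S = {-\<lceil>B\<rceil>..\<lceil>B\<rceil>}"
  have "vec_nth ` {n::int^'n. lnorm n < B} \<subseteq> PiE UNIV (\<lambda>_. S)"
  proof
    fix f assume "f \<in> vec_nth ` {n::int^'n. lnorm n < B}"
    then obtain n :: "int^'n" where n: "lnorm n < B" "f = vec_nth n" by auto
    have "n$i \<in> S" for i
      using abs_le_lnorm[of n i] n(1) unfolding S_def by (auto simp: abs_le_iff) linarith+
    thus "f \<in> PiE UNIV (\<lambda>_. S)" using n by auto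
  qed
  moreover have "finite (PiE (UNIV::'n set) (\<lambda>_. S))" unfolding S_def by (simp add: finite_PiE)
  ultimately have "finite (vec_nth ` {n::int^'n. lnorm n < B})" by (rule finite_subset)
  thus ?thesis by (rule finite_imageD) (auto simp: inj_on_def vec_eq_iff)
qed

text \<open>The one-dimensional series \<open>\<Sum>_(z\<in>\<int>) (1 + |z|)^(-p)\<close> converges for \<open>p > 1\<close>: split \<open>\<int>\<close>
  into the nonnegative and the negative integers, each a shifted \<open>p\<close>-series.\<close>
lemma nat_shifted_powr_summable:
  fixes p :: real assumes "p > 1"
  shows "(\<lambda>n::nat. real (n + k) powr (-p)) summable_on UNIV"
proof -
  have "summable (\<lambda>n::nat. real n powr (-p))" using assms by (subst summable_real_powr_iff) auto
  hence "summable (\<lambda>n::nat. real (n + k) powr (-p))"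
    by (subst summable_iff_shift[where k=k]) simp
  thus ?thesis by (subst summable_on_UNIV_nonneg_real_iff) auto
qed

lemma int_powr_summable:
  fixes p :: real assumes p: "p > 1"
  shows "(\<lambda>z::int. (1 + \<bar>real_of_int z\<bar>) powr (-p)) summable_on UNIV"
proof -
  let ?h = "\<lambda>z::int. (1 + \<bar>real_of_int z\<bar>) powr (-p)"
  have split: "(UNIV::int set) = range int \<union> range (\<lambda>n. - int n - 1)"
  proof -
    have "z \<in> range int \<union> range (\<lambda>n. - int n - 1)" for z :: int
    proof (cases "z \<ge> 0")
      case True thus ?thesis by (metis UnI1 nonneg_int_cases rangeI)
    next
      case False
      hence "z = - int (nat (-z-1)) - 1" by simp
      thus ?thesis by (metis UnI2 rangeI)
    qed
    thus ?thesis by auto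
  qed
  have "?h summable_on range int"
    using nat_shifted_powr_summable[OF p, of 1]
    by (subst summable_on_reindex) (simp_all add: inj_on_def o_def add.commute)
  moreover have "?h summable_on range (\<lambda>n. - int n - 1)"
    using nat_shifted_powr_summable[OF p, of 2]
    by (subst summable_on_reindex) (simp_all add: inj_on_def o_def add.commute)
  ultimately have "?h summable_on (range int \<union> range (\<lambda>n. - int n - 1))"
    by (rule summable_on_Un_disjoint) auto
  thus ?thesis using split by simp
qed

text \<open>If \<open>h \<ge> 0\<close> is summable over \<open>\<int>\<close>, then so is \<open>n \<mapsto> \<Prod>_i h(n_i)\<close> over \<open>\<int>^d\<close>: every
  finite partial sum is dominated by a finite product of partial sums of \<open>h\<close>.\<close>
lemma summable_on_coordinate_product:
  fixes h :: "int \<Rightarrow> real"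
  assumes hs: "h summable_on UNIV" and hp: "\<And>z. h z \<ge> 0"
  shows "(\<lambda>n::int^'n::finite. \<Prod>i\<in>UNIV. h (n$i)) summable_on UNIV"
proof (rule nonneg_bdd_above_summable_on)
  show "\<And>x. x \<in> UNIV \<Longrightarrow> 0 \<le> (\<Prod>i\<in>UNIV. h (x$i))" using hp by (simp add: prod_nonneg)
  show "bdd_above (sum (\<lambda>n::int^'n. \<Prod>i\<in>UNIV. h (n$i)) ` {F. F \<subseteq> UNIV \<and> finite F})"
  proof (rule bdd_aboveI2)
    fix F :: "(int^'n) set" assume "F \<in> {F. F \<subseteq> UNIV \<and> finite F}"
    hence F: "finite F" by simp
    define S where "S = (\<Union>i. (\<lambda>n. n$i) ` F)"
    have S: "finite S" unfolding S_def using F by auto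
    have "(\<Sum>n\<in>F. \<Prod>i\<in>UNIV. h (n$i)) = (\<Sum>f\<in>vec_nth ` F. \<Prod>i\<in>UNIV. h (f i))"
      by (subst sum.reindex) (auto simp: inj_on_def vec_eq_iff)
    also have "\<dots> \<le> (\<Sum>f\<in>PiE (UNIV::'n set) (\<lambda>_. S). \<Prod>i\<in>UNIV. h (f i))"
    proof (rule sum_mono2)
      show "finite (PiE (UNIV::'n set) (\<lambda>_. S))" using S by (simp add: finite_PiE)
    qed (auto simp: S_def PiE_def Pi_def hp prod_nonneg)
    also have "\<dots> = (\<Prod>i\<in>(UNIV::'n set). \<Sum>z\<in>S. h z)"
      by (subst prod_sum_PiE) (use S in auto)
    also have "\<dots> \<le> (\<Prod>i\<in>(UNIV::'n set). infsum h UNIV)"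
    proof (rule prod_mono)
      have "(\<Sum>z\<in>S. h z) \<le> infsum h UNIV"
        unfolding infsum_finite[symmetric, OF S] by (rule infsum_mono_neutral) (use S hs hp in auto)
      thus "0 \<le> (\<Sum>z\<in>S. h z) \<and> (\<Sum>z\<in>S. h z) \<le> infsum h UNIV" by (simp add: hp sum_nonneg)
    qed
    finally show "(\<Sum>n\<in>F. \<Prod>i\<in>UNIV. h (n$i)) \<le> (\<Prod>i\<in>(UNIV::'n set). infsum h UNIV)" .
  qed
qed

text \<open>\<open>\<Sum>_(n\<noteq>0) ||n||^(-r)\<close> converges over \<open>\<int>^d\<close> for \<open>r > d\<close>: with \<open>p = r/d > 1\<close>, each term is at most
  \<open>2^r \<Prod>_i (1 + |n_i|)^(-p)\<close>, since \<open>1 + |n_i| \<le> 2||n||\<close>.\<close>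
lemma lattice_powr_summable:
  fixes r :: real assumes r: "r > real CARD('n)"
  shows "(\<lambda>n::int^'n::finite. if n = 0 then 0 else lnorm n powr (-r)) summable_on UNIV"
proof -
  define d where "d = real CARD('n)"
  have d1: "d \<ge> 1" unfolding d_def by simp
  define p where "p = r / d"
  have p1: "p > 1" unfolding p_def using d1 r by (simp add: d_def field_simps)
  define h where "h = (\<lambda>z::int. (1 + \<bar>real_of_int z\<bar>) powr (-p))"
  have "(\<lambda>n::int^'n. \<Prod>i\<in>UNIV. h (n$i)) summable_on UNIV"
    by (rule summable_on_coordinate_product) (simp_all add: h_def int_powr_summable[OF p1])
  hence dom: "(\<lambda>n::int^'n. 2 powr r * (\<Prod>i\<in>UNIV. h (n$i))) summable_on UNIV"
    by (rule summable_on_cmult_right)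
  show ?thesis
  proof (rule summable_on_comparison_test[OF dom])
    fix n :: "int^'n"
    show "(if n = 0 then 0 else lnorm n powr (-r)) \<le> 2 powr r * (\<Prod>i\<in>UNIV. h (n$i))"
    proof (cases "n = 0")
      case True thus ?thesis by (simp add: h_def prod_nonneg)
    next
      case False
      define L where "L = lnorm n"
      have L1: "L \<ge> 1" unfolding L_def using lnorm_ge1[OF False] .
      have "(\<Prod>i\<in>(UNIV::'n set). 1 + \<bar>real_of_int (n$i)\<bar>) \<le> (\<Prod>i\<in>(UNIV::'n set). 2*L)"
      proof (rule prod_mono)
        fix i
        have "\<bar>real_of_int (n$i)\<bar> \<le> L" unfolding L_def by (rule abs_le_lnorm)
        thus "0 \<le> 1 + \<bar>real_of_int (n$i)\<bar> \<and> 1 + \<bar>real_of_int (n$i)\<bar> \<le> 2*L" using L1 by linarith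
      qed
      also have "\<dots> = (2*L) powr d" using L1 unfolding d_def by (simp add: powr_realpow)
      finally have P: "(\<Prod>i\<in>(UNIV::'n set). 1 + \<bar>real_of_int (n$i)\<bar>) \<le> (2*L) powr d" .
      have "(2*L) powr (-r) = ((2*L) powr d) powr (-p)"
        using d1 by (simp add: powr_powr p_def)
      also have "\<dots> \<le> (\<Prod>i\<in>(UNIV::'n set). 1 + \<bar>real_of_int (n$i)\<bar>) powr (-p)"
        by (rule powr_mono2'[OF _ _ P]) (use p1 in \<open>auto intro: prod_pos\<close>)
      also have "\<dots> = (\<Prod>i\<in>UNIV. h (n$i))"
        unfolding h_def by (simp add: prod_powr_distrib)
      finally have "2 powr r * (2*L) powr (-r) \<le> 2 powr r * (\<Prod>i\<in>UNIV. h (n$i))" by simp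
      moreover have "2 powr r * (2*L) powr (-r) = L powr (-r)"
        using L1 by (simp add: powr_mult powr_minus)
      ultimately show ?thesis using False unfolding L_def by simp
    qed
  qed simp
qed

lemma abs_summable_of_decay:
  fixes f :: "int^'n::finite \<Rightarrow> real" and r :: real
  assumes r: "r > real CARD('n)"
    and decay: "\<And>n. lnorm n \<ge> B \<Longrightarrow> \<bar>f n\<bar> \<le> K * lnorm n powr (-r)"
  shows "(\<lambda>n. \<bar>f n\<bar>) summable_on UNIV"
proof -
  define F where "F = {n::int^'n. lnorm n < max B 1}"
  have "(\<lambda>n. \<bar>K\<bar> * (if n = 0 then 0 else lnorm n powr (-r))) summable_on (UNIV - F)"
    by (rule summable_on_subset[OF summable_on_cmult_right[OF lattice_powr_summable[OF r]]]) auto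
  hence "(\<lambda>n. \<bar>f n\<bar>) summable_on (UNIV - F)"
  proof (rule summable_on_comparison_test)
    fix n assume "n \<in> UNIV - F"
    hence n: "lnorm n \<ge> max B 1" unfolding F_def by (simp add: not_less)
    hence "n \<noteq> 0" by (auto simp: lnorm_def)
    moreover have "\<bar>f n\<bar> \<le> K * lnorm n powr (-r)" using decay n by simp
    ultimately show "\<bar>f n\<bar> \<le> \<bar>K\<bar> * (if n = 0 then 0 else lnorm n powr (-r))"
      by (simp add: mult_right_mono order_trans)
  qed simp
  moreover have "(\<lambda>n. \<bar>f n\<bar>) summable_on F"
    unfolding F_def by (rule summable_on_finite[OF finite_lnorm_ball])
  ultimately have "(\<lambda>n. \<bar>f n\<bar>) summable_on ((UNIV - F) \<union> F)"
    by (rule summable_on_Un_disjoint) auto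
  thus ?thesis by simp
qed


section \<open>Second-order Taylor expansion of \<open>||N - K||^(2e)\<close>\<close>

text \<open>The second-order Taylor polynomial of \<open>K \<mapsto> ||N - K||^(2e) = (N\<cdot>N - 2 N\<cdot>K + K\<cdot>K)^e\<close>
  at \<open>K = 0\<close>.\<close>
definition taylor2 :: "real \<Rightarrow> 'a::real_inner \<Rightarrow> 'a \<Rightarrow> real" where
  "taylor2 e N K = (N\<bullet>N) powr e - 2*e * (N\<bullet>N) powr (e-1) * (N\<bullet>K)
     + 2*e*(e-1) * (N\<bullet>N) powr (e-2) * (N\<bullet>K)^2 + e * (N\<bullet>N) powr (e-1) * (K\<bullet>K)"

definition taylor_const :: "real \<Rightarrow> real" where
  "taylor_const e = (27*\<bar>e*(e-1)*(e-2)\<bar> * 4 powr (3-e) + 18*\<bar>e*(e-1)\<bar> * 4 powr (2-e)) / 6"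

lemma taylor_const_nonneg: "taylor_const e \<ge> 0"
  by (simp add: taylor_const_def)

lemma norm_sq_line:
  fixes N K :: "'a::real_inner"
  shows "(norm (N - t *\<^sub>R K))^2 = N \<bullet> N - 2 * (N \<bullet> K) * t + (K \<bullet> K) * t^2"
proof -
  have "(norm (N - t *\<^sub>R K))^2 = (N - t *\<^sub>R K) \<bullet> (N - t *\<^sub>R K)" by (rule power2_norm_eq_inner)
  thus ?thesis
    by (simp add: inner_diff_left inner_diff_right inner_commute[of K N] power2_eq_square algebra_simps)
qed

lemma maclaurin_quadratic_power:
  fixes a b c e :: real
  defines "q \<equiv> \<lambda>t. a - 2*b*t + c*t^2"
  defines "q' \<equiv> \<lambda>t. 2*c*t - 2*b"
  assumes qpos: "\<And>t. 0 \<le> t \<Longrightarrow> t \<le> 1 \<Longrightarrow> q t > 0"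
  shows "\<exists>t. 0 < t \<and> t < 1 \<and> q 1 powr e =
     a powr e + e * a powr (e-1) * (-2*b)
     + (e*(e-1) * a powr (e-2) * (-2*b)^2 + e * a powr (e-1) * (2*c)) / 2
     + (e*(e-1)*(e-2) * q t powr (e-3) * (q' t)^3 + 3*e*(e-1) * q t powr (e-2) * q' t * (2*c)) / 6"
proof -
  define diff where "diff = (\<lambda>(m::nat) (t::real). if m = 0 then q t powr e
     else if m = 1 then e * q t powr (e-1) * q' t
     else if m = 2 then e*(e-1) * q t powr (e-2) * (q' t)^2 + e * q t powr (e-1) * (2*c)
     else e*(e-1)*(e-2) * q t powr (e-3) * (q' t)^3 + 3*e*(e-1) * q t powr (e-2) * q' t * (2*c))"
  have dq: "\<And>t. (q has_real_derivative q' t) (at t)"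
    unfolding q_def q'_def by (auto intro!: derivative_eq_intros)
  have dq': "\<And>t. (q' has_real_derivative 2*c) (at t)"
    unfolding q'_def by (auto intro!: derivative_eq_intros)
  have D: "\<forall>m t. m < 3 \<and> 0 \<le> t \<and> t \<le> 1 \<longrightarrow> DERIV (diff m) t :> diff (Suc m) t"
  proof (intro allI impI)
    fix m :: nat and t :: real assume mt: "m < 3 \<and> 0 \<le> t \<and> t \<le> 1"
    hence qt: "q t > 0" using qpos by auto
    have P: "\<And>r. ((\<lambda>t. q t powr r) has_real_derivative r * q t powr (r - 1) * q' t) (at t)"
      using DERIV_fun_powr[OF dq qt] by simp
    consider "m = 0" | "m = 1" | "m = 2" using mt by linarith
    thus "DERIV (diff m) t :> diff (Suc m) t"
    proof cases
      case 1
      show ?thesis unfolding 1 diff_def using P[of e] by simp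
    next
      case 2
      have "((\<lambda>t. e * q t powr (e-1) * q' t) has_real_derivative
          e * ((e-1) * q t powr (e-1-1) * q' t) * q' t + e * q t powr (e-1) * (2*c)) (at t)"
        by (auto intro!: derivative_eq_intros P dq' dq qt)
      thus ?thesis unfolding 2 diff_def by (simp add: power2_eq_square algebra_simps)
    next
      case 3
      have "((\<lambda>t. e*(e-1) * q t powr (e-2) * (q' t)^2 + e * q t powr (e-1) * (2*c)) has_real_derivative
          e*(e-1) * ((e-2) * q t powr (e-2-1) * q' t) * (q' t)^2
          + e*(e-1) * q t powr (e-2) * (2 * q' t * (2*c))
          + e * ((e-1) * q t powr (e-1-1) * q' t) * (2*c)) (at t)"
        by (auto intro!: derivative_eq_intros P dq' dq qt simp: power2_eq_square)
      thus ?thesis unfolding 3 diff_def by (simp add: power2_eq_square power3_eq_cube algebra_simps)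
    qed
  qed
  obtain t where t: "0 < t" "t < 1"
    "diff 0 1 = (\<Sum>m<3. diff m 0 / fact m * 1 ^ m) + diff 3 t / fact 3 * 1 ^ 3"
    using Maclaurin[of 1 3 diff "diff 0", OF _ _ refl D] by auto
  have "q 0 = a" "q' 0 = -2*b" unfolding q_def q'_def by auto
  with t show ?thesis
    by (intro exI[of _ t]) (simp add: diff_def numeral_3_eq_3 fact_numeral)
qed

lemma powr_scale_bound:
  fixes L x e m :: real
  assumes L: "L > 0" and x: "x \<ge> L^2/4" and em: "e - m \<le> 0"
  shows "x powr (e - m) * L^j \<le> 4 powr (m - e) * L powr (2*e - 2*m + j)"
proof -
  have sq: "L^2 = L powr 2" using powr_realpow[OF L, of 2] by simp
  have "x powr (e - m) \<le> (L^2/4) powr (e - m)"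
    by (rule powr_mono2'[OF em _ x]) (use L in simp)
  also have "\<dots> = (L powr 2) powr (e - m) / 4 powr (e - m)"
    unfolding sq by (rule powr_divide)
  also have "\<dots> = 4 powr (m - e) * L powr (2*e - 2*m)"
    using powr_minus_divide[of 4 "e - m"] by (simp add: powr_powr algebra_simps)
  finally have "x powr (e - m) * L powr j \<le> 4 powr (m - e) * (L powr (2*e - 2*m) * L powr j)"
    by (metis mult.assoc mult_right_mono powr_ge_zero)
  thus ?thesis using L by (simp add: powr_add powr_realpow)
qed

text \<open>Bound for the remainder term in \<open>maclaurin_quadratic_power\<close>, in terms of
  \<open>L \<approx> ||N||\<close> and \<open>R \<approx> ||K||\<close> (with \<open>x = q(t)\<close> and \<open>y = q'(t)\<close>).\<close>
lemma maclaurin_remainder_bound: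
  fixes L R e x y c :: real
  assumes L: "L > 0" and R: "R \<ge> 0" and x: "x \<ge> L^2/4"
    and y: "\<bar>y\<bar> \<le> 3*L*R" and c: "\<bar>c\<bar> \<le> R^2" and e: "e \<le> 0"
  shows "\<bar>(e*(e-1)*(e-2) * x powr (e-3) * y^3 + 3*e*(e-1) * x powr (e-2) * y * (2*c)) / 6\<bar>
     \<le> taylor_const e * R^3 * L powr (2*e-3)"
proof -
  define E3 where "E3 = \<bar>e*(e-1)*(e-2)\<bar>"
  define E2 where "E2 = \<bar>e*(e-1)\<bar>"
  have y3: "\<bar>y\<bar>^3 \<le> 27 * R^3 * L^3"
    using power_mono[OF y, of 3] by (simp add: power_mult_distrib mult_ac)
  have "\<bar>e*(e-1)*(e-2) * x powr (e-3) * y^3\<bar> = E3 * x powr (e-3) * \<bar>y\<bar>^3"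
    by (simp add: E3_def abs_mult power_abs)
  also have "\<dots> \<le> E3 * x powr (e-3) * (27 * R^3 * L^3)"
    by (intro mult_left_mono y3) (simp_all add: E3_def)
  also have "\<dots> = 27 * E3 * R^3 * (x powr (e-3) * L^3)" by simp
  also have "\<dots> \<le> 27 * E3 * R^3 * (4 powr (3-e) * L powr (2*e-3))"
    using powr_scale_bound[OF L x, of e 3 3] e R by (intro mult_left_mono) (simp_all add: E3_def)
  finally have T3: "\<bar>e*(e-1)*(e-2) * x powr (e-3) * y^3\<bar> \<le> 27 * E3 * 4 powr (3-e) * R^3 * L powr (2*e-3)"
    by (simp add: mult_ac)
  have yc: "\<bar>y\<bar> * \<bar>2*c\<bar> \<le> 6 * R^3 * L"
    using mult_mono[OF y, of "\<bar>2*c\<bar>" "2*R^2"] c L R by (simp add: power2_eq_square power3_eq_cube mult_ac)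
  have "\<bar>3*e*(e-1) * x powr (e-2) * y * (2*c)\<bar> = 3 * E2 * x powr (e-2) * (\<bar>y\<bar> * \<bar>2*c\<bar>)"
    by (simp add: E2_def abs_mult)
  also have "\<dots> \<le> 3 * E2 * x powr (e-2) * (6 * R^3 * L)"
    by (intro mult_left_mono yc) (simp_all add: E2_def)
  also have "\<dots> = 18 * E2 * R^3 * (x powr (e-2) * L^1)" by simp
  also have "\<dots> \<le> 18 * E2 * R^3 * (4 powr (2-e) * L powr (2*e-3))"
    using powr_scale_bound[OF L x, of e 2 1] e R by (intro mult_left_mono) (simp_all add: E2_def)
  finally have T2: "\<bar>3*e*(e-1) * x powr (e-2) * y * (2*c)\<bar> \<le> 18 * E2 * 4 powr (2-e) * R^3 * L powr (2*e-3)"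
    by (simp add: mult_ac)
  have "\<bar>(e*(e-1)*(e-2) * x powr (e-3) * y^3 + 3*e*(e-1) * x powr (e-2) * y * (2*c)) / 6\<bar>
      \<le> (\<bar>e*(e-1)*(e-2) * x powr (e-3) * y^3\<bar> + \<bar>3*e*(e-1) * x powr (e-2) * y * (2*c)\<bar>) / 6"
    by (simp add: divide_right_mono abs_triangle_ineq)
  also have "\<dots> \<le> (27 * E3 * 4 powr (3-e) * R^3 * L powr (2*e-3) + 18 * E2 * 4 powr (2-e) * R^3 * L powr (2*e-3)) / 6"
    using T3 T2 by simp
  also have "\<dots> = taylor_const e * R^3 * L powr (2*e-3)"
    by (simp add: taylor_const_def E3_def E2_def algebra_simps add_divide_distrib)
  finally show ?thesis .
qed

text \<open>On the segment from \<open>N\<close> to \<open>N - K\<close>, with \<open>||K|| \<le> ||N||/2\<close>, the norm stays at least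
  \<open>||N||/2\<close>, and the derivative \<open>2 (K\<cdot>K) t - 2 N\<cdot>K\<close> of \<open>||N - t K||^2\<close> is \<open>O(||N|| ||K||)\<close>.\<close>
lemma norm_segment_lower_bound:
  fixes N K :: "'a::real_normed_vector"
  assumes KN: "norm K \<le> norm N / 2" and t: "0 \<le> t" "t \<le> 1"
  shows "norm N / 2 \<le> norm (N - t *\<^sub>R K)"
proof -
  have "norm (t *\<^sub>R K) \<le> norm K" using t by (simp add: mult_left_le_one_le)
  moreover have "norm N - norm (t *\<^sub>R K) \<le> norm (N - t *\<^sub>R K)" by (rule norm_triangle_ineq2)
  ultimately show ?thesis using KN by linarith
qed

lemma segment_derivative_bound:
  fixes N K :: "'a::real_inner"
  assumes KN: "norm K \<le> norm N / 2" and t: "0 \<le> t" "t \<le> 1"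
  shows "\<bar>2*(K \<bullet> K)*t - 2*(N \<bullet> K)\<bar> \<le> 3 * norm N * norm K"
proof -
  have "0 \<le> (K \<bullet> K)*t" "(K \<bullet> K)*t \<le> norm K ^ 2"
    using t mult_left_le[of t "norm K ^ 2"] by (auto simp: power2_norm_eq_inner)
  moreover have "\<bar>N \<bullet> K\<bar> \<le> norm N * norm K" by (rule Cauchy_Schwarz_ineq2)
  ultimately have "\<bar>2*(K \<bullet> K)*t - 2*(N \<bullet> K)\<bar> \<le> 2 * norm K ^ 2 + 2 * (norm N * norm K)"
    by (simp add: abs_le_iff)
  also have "\<dots> \<le> 3 * norm N * norm K"
    using KN mult_right_mono[of "norm K" "norm N / 2" "norm K"] by (simp add: power2_eq_square mult.commute)
  finally show ?thesis .
qed

lemma norm_powr_taylor: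
  fixes N K :: "'a::real_inner" and e :: real
  assumes N: "N \<noteq> 0" and KN: "norm K \<le> norm N / 2" and e: "e \<le> 0"
  shows "\<bar>norm (N - K) powr (2*e) - taylor2 e N K\<bar> \<le> taylor_const e * norm K ^ 3 * norm N powr (2*e-3)"
proof -
  define a b c L R where "a = N \<bullet> N" and "b = N \<bullet> K" and "c = K \<bullet> K"
    and "L = norm N" and "R = norm K"
  have L0: "L > 0" using N unfolding L_def by auto
  have R0: "R \<ge> 0" unfolding R_def by simp
  have q_eq: "a - 2*b*t + c*t^2 = (norm (N - t *\<^sub>R K))^2" for t
    unfolding a_def b_def c_def by (subst norm_sq_line) (simp add: ac_simps)
  have q_low: "a - 2*b*t + c*t^2 \<ge> L^2/4" if "0 \<le> t" "t \<le> 1" for t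
  proof -
    have "(L/2)^2 \<le> (norm (N - t *\<^sub>R K))^2"
      using norm_segment_lower_bound[OF KN that] L0 unfolding L_def by (intro power_mono) auto
    thus ?thesis unfolding q_eq by (simp add: power_divide)
  qed
  have q_pos: "a - 2*b*t + c*t^2 > 0" if "0 \<le> t" "t \<le> 1" for t
    using q_low[OF that] L0 by (smt (verit) zero_less_power divide_pos_pos)
  obtain t where t: "0 < t" "t < 1" and expansion: "(a - 2*b*1 + c*1^2) powr e =
     a powr e + e * a powr (e-1) * (-2*b)
     + (e*(e-1) * a powr (e-2) * (-2*b)^2 + e * a powr (e-1) * (2*c)) / 2
     + (e*(e-1)*(e-2) * (a - 2*b*t + c*t^2) powr (e-3) * (2*c*t - 2*b)^3
        + 3*e*(e-1) * (a - 2*b*t + c*t^2) powr (e-2) * (2*c*t - 2*b) * (2*c)) / 6"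
    using maclaurin_quadratic_power[of a b c e, OF q_pos] by blast
  have "N \<noteq> K" using KN N by auto
  hence sq: "(norm (N - K))^2 = norm (N - K) powr 2" using powr_realpow[of "norm (N - K)" 2] by simp
  have "(a - 2*b*1 + c*1^2) powr e = (norm (N - K) powr 2) powr e"
    using q_eq[of 1] unfolding sq by simp
  hence lhs: "(a - 2*b*1 + c*1^2) powr e = norm (N - K) powr (2*e)"
    by (simp only: powr_powr)
  have poly: "a powr e + e * a powr (e-1) * (-2*b)
     + (e*(e-1) * a powr (e-2) * (-2*b)^2 + e * a powr (e-1) * (2*c)) / 2 = taylor2 e N K"
    unfolding taylor2_def a_def b_def c_def by (simp add: power2_eq_square field_simps)
  have c: "c = R^2" unfolding c_def R_def by (simp add: power2_norm_eq_inner)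
  have y: "\<bar>2*c*t - 2*b\<bar> \<le> 3*L*R"
    using segment_derivative_bound[OF KN, of t] t unfolding b_def c_def L_def R_def by simp
  have "\<bar>(e*(e-1)*(e-2) * (a - 2*b*t + c*t^2) powr (e-3) * (2*c*t - 2*b)^3
        + 3*e*(e-1) * (a - 2*b*t + c*t^2) powr (e-2) * (2*c*t - 2*b) * (2*c)) / 6\<bar>
      \<le> taylor_const e * R^3 * L powr (2*e-3)"
    by (rule maclaurin_remainder_bound[OF L0 R0 q_low y _ e]) (use c t in auto)
  moreover have "norm (N - K) powr (2*e) - taylor2 e N K =
      (e*(e-1)*(e-2) * (a - 2*b*t + c*t^2) powr (e-3) * (2*c*t - 2*b)^3
        + 3*e*(e-1) * (a - 2*b*t + c*t^2) powr (e-2) * (2*c*t - 2*b) * (2*c)) / 6"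
    using expansion lhs poly by linarith
  ultimately have "\<bar>norm (N - K) powr (2*e) - taylor2 e N K\<bar> \<le> taylor_const e * R^3 * L powr (2*e-3)"
    by simp
  thus ?thesis unfolding L_def R_def .
qed

section \<open>Moment conditions\<close>

lemma first_moment_vanishes:
  fixes G :: "'k \<Rightarrow> real" and K :: "'k \<Rightarrow> real^'n::finite"
  assumes "\<And>i. (\<Sum>k\<in>S. G k * K k $ i) = 0"
  shows "(\<Sum>k\<in>S. G k * (N \<bullet> K k)) = 0"
proof -
  have "(\<Sum>k\<in>S. G k * (N \<bullet> K k)) = (\<Sum>i\<in>UNIV. N $ i * (\<Sum>k\<in>S. G k * K k $ i))"
    by (simp add: inner_vec_def sum_distrib_left sum.swap[of _ S] algebra_simps)
  thus ?thesis using assms by simp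
qed

lemma isotropic_second_moments:
  fixes G :: "'k \<Rightarrow> real" and K :: "'k \<Rightarrow> real^'n::finite"
  assumes M: "\<And>i j. (\<Sum>k\<in>S. G k * K k $ i * K k $ j) = (if i = j then M else 0)"
  shows "(\<Sum>k\<in>S. G k * (N \<bullet> K k)^2) = M * (N \<bullet> N)"
    and "(\<Sum>k\<in>S. G k * (K k \<bullet> K k)) = M * real CARD('n)"
proof -
  have "(\<Sum>k\<in>S. G k * (N \<bullet> K k)^2)
      = (\<Sum>i\<in>UNIV. \<Sum>j\<in>UNIV. N $ i * N $ j * (\<Sum>k\<in>S. G k * K k $ i * K k $ j))"
    by (simp add: inner_vec_def power2_eq_square sum_product sum_distrib_left
        sum.swap[of _ S] algebra_simps)
  also have "\<dots> = (\<Sum>i\<in>UNIV. \<Sum>j\<in>UNIV. N $ i * N $ j * (if i = j then M else 0))"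
    by (simp only: M)
  also have "\<dots> = M * (N \<bullet> N)"
    by (simp add: inner_vec_def sum_distrib_left if_distrib mult_ac cong: if_cong)
  finally show "(\<Sum>k\<in>S. G k * (N \<bullet> K k)^2) = M * (N \<bullet> N)" .
  have "(\<Sum>k\<in>S. G k * (K k \<bullet> K k)) = (\<Sum>i\<in>UNIV. \<Sum>k\<in>S. G k * K k $ i * K k $ i)"
    by (simp add: inner_vec_def sum_distrib_left sum.swap[of _ S] algebra_simps)
  also have "\<dots> = M * real CARD('n)" by (simp add: M)
  finally show "(\<Sum>k\<in>S. G k * (K k \<bullet> K k)) = M * real CARD('n)" .
qed

lemma second_moments_isotropic:
  fixes G :: "'k \<Rightarrow> real" and K :: "'k \<Rightarrow> real^'n::finite"
  assumes C: "\<And>i j. i \<noteq> j \<Longrightarrow> (\<Sum>k\<in>S. G k * K k $ i * K k $ j) = 0"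
    and D: "\<And>i j. i \<noteq> j \<Longrightarrow> (\<Sum>k\<in>S. G k * ((K k $ i)^2 - (K k $ j)^2)) = 0"
  shows "\<exists>M. \<forall>i j. (\<Sum>k\<in>S. G k * K k $ i * K k $ j) = (if i = j then M else 0)"
proof -
  define i0 where "i0 = (undefined :: 'n)"
  have "(\<Sum>k\<in>S. G k * K k $ i * K k $ i) = (\<Sum>k\<in>S. G k * K k $ i0 * K k $ i0)" for i
  proof (cases "i = i0")
    case False
    have "(\<Sum>k\<in>S. G k * K k $ i * K k $ i) - (\<Sum>k\<in>S. G k * K k $ i0 * K k $ i0)
        = (\<Sum>k\<in>S. G k * ((K k $ i)^2 - (K k $ i0)^2))"
      by (simp add: sum_subtractf[symmetric] power2_eq_square algebra_simps)
    thus ?thesis using D[OF False] by simp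
  qed simp
  with C show ?thesis by (intro exI[of _ "\<Sum>k\<in>S. G k * K k $ i0 * K k $ i0"]) auto
qed

lemma taylor2_moment_sum:
  fixes G :: "'k \<Rightarrow> real" and K :: "'k \<Rightarrow> real^'n::finite"
  assumes A: "(\<Sum>k\<in>S. G k) = 0"
    and B: "\<And>i. (\<Sum>k\<in>S. G k * K k $ i) = 0"
    and M: "\<And>i j. (\<Sum>k\<in>S. G k * K k $ i * K k $ j) = (if i = j then M else 0)"
    and N: "N \<noteq> 0"
  shows "(\<Sum>k\<in>S. G k * taylor2 e N (K k)) = e * M * (2*e - 2 + real CARD('n)) * (N \<bullet> N) powr (e-1)"
proof -
  define a where "a = N \<bullet> N"
  have "a > 0" using N unfolding a_def by simp
  hence a: "a powr (e-1) = a * a powr (e-2)"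
    using powr_add[of a "e-2" 1] by (simp add: mult.commute)
  have "(\<Sum>k\<in>S. G k * taylor2 e N (K k)) = a powr e * (\<Sum>k\<in>S. G k)
      - 2*e * a powr (e-1) * (\<Sum>k\<in>S. G k * (N \<bullet> K k))
      + 2*e*(e-1) * a powr (e-2) * (\<Sum>k\<in>S. G k * (N \<bullet> K k)^2)
      + e * a powr (e-1) * (\<Sum>k\<in>S. G k * (K k \<bullet> K k))"
    unfolding taylor2_def a_def
    by (simp add: sum.distrib sum_subtractf sum_distrib_left sum_distrib_right algebra_simps)
  also have "\<dots> = 2*e*(e-1) * a powr (e-2) * (M * a) + e * a powr (e-1) * (M * real CARD('n))"
    using A first_moment_vanishes[OF B] isotropic_second_moments[OF M] by (simp add: a_def)
  also have "\<dots> = e * M * (2*e - 2 + real CARD('n)) * a powr (e-1)"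
    unfolding a by (simp add: algebra_simps)
  finally show ?thesis unfolding a_def .
qed

section \<open>Decay of \<open>g \<cdot> \<omega>\<close>\<close>

lemma real_moment_conditions:
  fixes g :: "int ^ 'n::finite \<Rightarrow> int"
  assumes A: "(\<Sum>k\<in>supp g. g k) = 0"
    and B: "\<And>i. (\<Sum>k\<in>supp g. g k * k $ i) = 0"
    and C: "\<And>i j. i \<noteq> j \<Longrightarrow> (\<Sum>k\<in>supp g. g k * k $ i * k $ j) = 0"
    and D: "\<And>i j. i \<noteq> j \<Longrightarrow> (\<Sum>k\<in>supp g. g k * ((k $ i)\<^sup>2 - (k $ j)\<^sup>2)) = 0"
  shows "(\<Sum>k\<in>supp g. real_of_int (g k)) = 0"
    and "\<And>i. (\<Sum>k\<in>supp g. real_of_int (g k) * rv k $ i) = 0"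
    and "\<exists>M. \<forall>i j. (\<Sum>k\<in>supp g. real_of_int (g k) * rv k $ i * rv k $ j) = (if i = j then M else 0)"
proof -
  show "(\<Sum>k\<in>supp g. real_of_int (g k)) = 0"
    using arg_cong[OF A, of real_of_int] by simp
  show "(\<Sum>k\<in>supp g. real_of_int (g k) * rv k $ i) = 0" for i
    using arg_cong[OF B[of i], of real_of_int] by (simp add: rv_def)
  have C': "(\<Sum>k\<in>supp g. real_of_int (g k) * rv k $ i * rv k $ j) = 0" if "i \<noteq> j" for i j
    using arg_cong[OF C[OF that], of real_of_int] by (simp add: rv_def)
  have D': "(\<Sum>k\<in>supp g. real_of_int (g k) * ((rv k $ i)^2 - (rv k $ j)^2)) = 0" if "i \<noteq> j" for i j
    using arg_cong[OF D[OF that], of real_of_int] by (simp add: rv_def)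
  show "\<exists>M. \<forall>i j. (\<Sum>k\<in>supp g. real_of_int (g k) * rv k $ i * rv k $ j) = (if i = j then M else 0)"
    by (rule second_moments_isotropic[OF C' D'])
qed

lemma conv_taylor_error:
  fixes g :: "int ^ 'n::finite \<Rightarrow> int" and s :: int
  assumes s: "s \<ge> 0" and R: "R \<ge> 0" "\<And>k. k \<in> supp g \<Longrightarrow> lnorm k \<le> R"
    and n: "2*R < lnorm n"
  shows "\<bar>conv g (omega s) n - (\<Sum>k\<in>supp g. real_of_int (g k) * taylor2 (-s/2) (rv n) (rv k))\<bar>
    \<le> (\<Sum>k\<in>supp g. \<bar>real_of_int (g k)\<bar>) * (taylor_const (-s/2) * R^3 * lnorm n powr (- real_of_int s - 3))"
proof -
  define e where "e = - real_of_int s / 2"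
  define L where "L = lnorm n"
  have L: "L > 0" using n R unfolding L_def by linarith
  have each_term: "\<bar>omega s (n - k) - taylor2 e (rv n) (rv k)\<bar> \<le> taylor_const e * R^3 * L powr (- real_of_int s - 3)"
    if k: "k \<in> supp g" for k
  proof -
    have N: "rv n \<noteq> 0" using L by (auto simp: L_def rv_eq_0_iff lnorm_def)
    have K: "norm (rv k) \<le> norm (rv n) / 2" using R(2)[OF k] n by (simp add: norm_rv)
    have "n \<noteq> k"
    proof
      assume "n = k"
      with K have "norm (rv n) \<le> 0" by simp
      with N show False by simp
    qed
    hence "n - k \<noteq> 0" by simp
    hence "omega s (n - k) = norm (rv n - rv k) powr (2*e)"
      by (simp add: omega_def e_def rv_diff[symmetric] norm_rv)
    moreover have "taylor_const e * norm (rv k) ^ 3 * norm (rv n) powr (2*e-3)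
        \<le> taylor_const e * R^3 * L powr (- real_of_int s - 3)"
      using R(2)[OF k] L norm_ge_zero[of "rv k"]
      by (auto intro!: mult_right_mono mult_left_mono power_mono taylor_const_nonneg
          simp: norm_rv L_def e_def)
    ultimately show ?thesis
      using norm_powr_taylor[OF N K, of e] s by (simp add: e_def)
  qed
  have "conv g (omega s) n - (\<Sum>k\<in>supp g. real_of_int (g k) * taylor2 e (rv n) (rv k))
      = (\<Sum>k\<in>supp g. real_of_int (g k) * (omega s (n - k) - taylor2 e (rv n) (rv k)))"
    by (simp add: conv_def sum_subtractf right_diff_distrib)
  also have "\<bar>\<dots>\<bar> \<le> (\<Sum>k\<in>supp g. \<bar>real_of_int (g k)\<bar> * (taylor_const e * R^3 * L powr (- real_of_int s - 3)))"
    by (rule order_trans[OF sum_abs]) (auto simp: abs_mult intro!: sum_mono mult_left_mono each_term)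
  finally show ?thesis by (simp add: sum_distrib_right e_def L_def)
qed

text \<open>The Taylor part equals
  \<open>e M (d - 2 - s) ||n||^(-s-2)\<close>, which vanishes for \<open>s = d - 2\<close> and is small enough
  for \<open>s \<ge> d - 1\<close>; the error is \<open>O(||n||^(-s-3))\<close>.\<close>
lemma conv_decay:
  fixes g :: "int ^ 'n::finite \<Rightarrow> int" and s :: int
  assumes fin: "finite (supp g)"
    and A: "(\<Sum>k\<in>supp g. real_of_int (g k)) = 0"
    and B: "\<And>i. (\<Sum>k\<in>supp g. real_of_int (g k) * rv k $ i) = 0"
    and M: "\<And>i j. (\<Sum>k\<in>supp g. real_of_int (g k) * rv k $ i * rv k $ j) = (if i = j then M else 0)"
    and s: "s \<ge> int CARD('n) - 2" and s0: "s \<ge> 0"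
  obtains K0 B0 where "\<And>n. lnorm n \<ge> B0 \<Longrightarrow>
    \<bar>conv g (omega s) n\<bar> \<le> K0 * lnorm n powr (-(real CARD('n) + 1))"
proof -
  define d where "d = real CARD('n)"
  define e where "e = - real_of_int s / 2"
  define R where "R = Max (insert 0 (lnorm ` supp g))"
  define coef where "coef = e * M * (2*e - 2 + d)"
  define err where "err = (\<Sum>k\<in>supp g. \<bar>real_of_int (g k)\<bar>) * taylor_const e * R^3"
  have R: "R \<ge> 0" "\<And>k. k \<in> supp g \<Longrightarrow> lnorm k \<le> R"
    unfolding R_def using fin by auto
  have "\<bar>conv g (omega s) n\<bar> \<le> (\<bar>coef\<bar> + err) * lnorm n powr (-(real CARD('n) + 1))"
    if n: "lnorm n \<ge> 2*R + 1" for n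
  proof -
    define L where "L = lnorm n"
    have L1: "L \<ge> 1" using n R unfolding L_def by linarith
    have N: "rv n \<noteq> 0" using L1 by (auto simp: L_def rv_eq_0_iff lnorm_def)
    have "(rv n \<bullet> rv n) powr (e-1) = (L powr 2) powr (e-1)"
      using L1 powr_realpow[of L 2] by (simp add: L_def flip: norm_rv power2_norm_eq_inner)
    hence main: "(\<Sum>k\<in>supp g. real_of_int (g k) * taylor2 e (rv n) (rv k)) = coef * L powr (- real_of_int s - 2)"
      using taylor2_moment_sum[OF A B M N, of e] by (simp add: coef_def d_def powr_powr e_def algebra_simps)
    have "\<bar>conv g (omega s) n - coef * L powr (- real_of_int s - 2)\<bar> \<le> err * L powr (- real_of_int s - 3)"
      using conv_taylor_error[where g=g and n=n, OF s0 R] n main by (simp add: err_def e_def L_def mult_ac)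
    moreover have "\<bar>coef * L powr (- real_of_int s - 2)\<bar> = \<bar>coef\<bar> * L powr (- real_of_int s - 2)" by (simp add: abs_mult)
    ultimately have "\<bar>conv g (omega s) n\<bar> \<le> \<bar>coef\<bar> * L powr (- real_of_int s - 2) + err * L powr (- real_of_int s - 3)"
      by linarith
    also have "\<dots> \<le> \<bar>coef\<bar> * L powr (-(d+1)) + err * L powr (-(d+1))"
    proof (rule add_mono)
      show "\<bar>coef\<bar> * L powr (- real_of_int s - 2) \<le> \<bar>coef\<bar> * L powr (-(d+1))"
      proof (cases "coef = 0")
        case False
        hence "real_of_int s \<noteq> d - 2" by (auto simp: coef_def e_def)
        hence "s \<ge> int CARD('n) - 1" using s by (auto simp: d_def)
        hence "L powr (- real_of_int s - 2) \<le> L powr (-(d+1))" using L1 by (intro powr_mono) (auto simp: d_def)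
        thus ?thesis by (simp add: mult_left_mono)
      qed simp
      have "L powr (- real_of_int s - 3) \<le> L powr (-(d+1))" using L1 s by (intro powr_mono) (auto simp: d_def)
      thus "err * L powr (- real_of_int s - 3) \<le> err * L powr (-(d+1))"
        by (rule mult_left_mono) (simp add: err_def taylor_const_nonneg R sum_nonneg)
    qed
    finally show ?thesis by (simp add: L_def d_def algebra_simps)
  qed
  thus ?thesis using that by blast
qed

theorem lemma2p9:
  fixes g :: "int ^ 'n::finite \<Rightarrow> int" and s :: int
  assumes d2: "CARD('n) \<ge> 2"
    and lp: "laurent_poly g"
    and A: "(\<Sum>k\<in>supp g. g k) = 0"
    and B: "\<And>i. (\<Sum>k\<in>supp g. g k * k $ i) = 0"
    and C: "\<And>i j. i \<noteq> j \<Longrightarrow> (\<Sum>k\<in>supp g. g k * k $ i * k $ j) = 0"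
    and D: "\<And>i j. i \<noteq> j \<Longrightarrow> (\<Sum>k\<in>supp g. g k * ((k $ i)\<^sup>2 - (k $ j)\<^sup>2)) = 0"
    and s: "s \<ge> int CARD('n) - 2"
  shows "(\<lambda>n. \<bar>conv g (omega s) n\<bar>) summable_on UNIV"
proof -
  note moments = real_moment_conditions[OF A B C D]
  obtain M where M: "\<And>i j. (\<Sum>k\<in>supp g. real_of_int (g k) * rv k $ i * rv k $ j) = (if i = j then M else 0)"
    using moments(3) by blast
  have "s \<ge> 0" using s d2 by linarith
  moreover have "finite (supp g)" using lp by (simp add: laurent_poly_def)
  ultimately obtain K0 B0 where decay: "\<And>n. lnorm n \<ge> B0 \<Longrightarrow>
      \<bar>conv g (omega s) n\<bar> \<le> K0 * lnorm n powr (-(real CARD('n) + 1))"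
    using conv_decay[OF _ moments(1,2) M s] by metis
  show ?thesis
    by (rule abs_summable_of_decay[where r="real CARD('n) + 1" and B=B0 and K=K0]) (use decay in auto)
qed
end
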